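(* Let $\mathcal{X}$ be a compact set equipped with a probability measure $\mu$ (e.g. the uniform distribution). Let $\pi:\mathcal{X}\to(0,1)$ be measurable with $m:=\inf_{x}\pi(x)>0$, and set $L_\pi:=1/m$. Let $\hat\pi:\mathcal{X}\to\mathbb{R}$ and $\sigma:\mathcal{X}\to[0,\infty)$ be measurable and $\beta\ge0$ such that $|\pi(x)-\hat\pi(x)|\le\beta\sigma(x)$ for all $x\in\mathcal{X}$. Define $u(x):=\min\{1,\max\{0,\hat\pi(x)+\beta\sigma(x)\}\}$, the densities (w.r.t. $\mu$) $\hat p(x):=u(x)/\int u\,d\mu$ and $\ell(x):=\pi(x)/\int\pi\,d\mu$. Then $$\mathrm{KL}(\hat p\,\|\,\ell)\le 2L_\pi\,\beta\,\mathbb{E}_{x\sim\hat p}[\sigma(x)].$$ In particular, in the batch BORE++ setting, with $\hat\pi=\hat\pi_{t-1}$, $\sigma=\sigma_{t-1}$, $\beta=\beta_{t-1}(\delta)$ on the high-probability event of the confidence bound, the target batch-sampling distribution $\hat p_t\propto\pi_{t-1,\delta}$ satisfies $\mathrm{KL}(\hat p_t\|\ell)\le 2L_\pi\beta_{t-1}(\delta)\mathbb{E}_{\hat p_t}[\sigma_{t-1}]$, where $\ell(x)=p(x\mid y\le\tau)$.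
   Context: $\mathrm{KL}(p\|q):=\mathbb{E}_{x\sim p}[\log p(x)-\log q(x)]$. Note $u\ge\pi>0$ under the hypothesis, so $\hat p$ is well defined. In the batch BORE++ setting, $\pi(x)=\Phi_\epsilon(\tau-f(x))=p(y\le\tau\mid x)$ and $\pi_{t,\delta}:=\min\{1,\max\{0,\hat\pi_t+\beta_t(\delta)\sigma_t\}\}$ with $\hat\pi_t,\sigma_t,\beta_t$ the kernel least-squares estimator, posterior standard deviation and confidence width computed from all observations collected so far. *)

theory Defs
  imports "HOL-Probability.Probability"
begin

definition clip_ucb :: "('a \<Rightarrow> real) \<Rightarrow> real \<Rightarrow> ('a \<Rightarrow> real) \<Rightarrow> 'a \<Rightarrow> real" where
  "clip_ucb pihat beta sd x = min 1 (max 0 (pihat x + beta * sd x))"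

definition normalize_density :: "'a measure \<Rightarrow> ('a \<Rightarrow> real) \<Rightarrow> 'a \<Rightarrow> real" where
  "normalize_density M f x = f x / (\<integral>y. f y \<partial>M)"

definition KL_dens :: "'a measure \<Rightarrow> ('a \<Rightarrow> real) \<Rightarrow> ('a \<Rightarrow> real) \<Rightarrow> real" where
  "KL_dens M p q = (\<integral>x. p x * (ln (p x) - ln (q x)) \<partial>M)"

end

theory Submission
  imports Defs
begin

text \<open>Since \<open>\<pi> \<le> u\<close> pointwise, the normaliser of \<open>u\<close> dominates that of \<open>\<pi>\<close>, so the log-ratio of
  the normalised densities is at most \<open>ln (u/\<pi>) \<le> (u - \<pi>)/\<pi>\<close>. The confidence bound gives
  \<open>u - \<pi> \<le> 2\<beta>\<sigma>\<close>, and \<open>\<pi> \<ge> m\<close> turns this into the pointwise bound \<open>2\<beta>\<sigma>/m\<close>; integrating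
  against the normalised \<open>u\<close> (dropping the negative part of the integrand) gives the claim.\<close>

lemma ln_normalized_ratio_le:
  fixes a b Za Zb :: real
  assumes "0 < b" "b \<le> a" "0 < Zb" "Zb \<le> Za"
  shows "ln (a / Za) - ln (b / Zb) \<le> (a - b) / b"
proof -
  have "ln (a / Za) - ln (b / Zb) = ln (a / b) - ln (Za / Zb)"
    using assms by (simp add: ln_div)
  also have "\<dots> \<le> ln (a / b)"
    using assms by simp
  also have "\<dots> \<le> a / b - 1"
    using assms by (intro ln_le_minus_one) simp
  also have "\<dots> = (a - b) / b"
    using assms by (simp add: field_simps)
  finally show ?thesis .
qed

lemma normalized_log_ratio_le:
  fixes a b Za Zb c s m :: real
  assumes "0 < m" "m \<le> b" "b \<le> a" "0 < Zb" "Zb \<le> Za" "a - b \<le> c * s" "0 \<le> c * s"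
  shows "a / Za * (ln (a / Za) - ln (b / Zb)) \<le> c / m * (a / Za * s)"
proof -
  have "ln (a / Za) - ln (b / Zb) \<le> (a - b) / b"
    using assms by (intro ln_normalized_ratio_le) auto
  also have "\<dots> \<le> c * s / b"
    using assms by (intro divide_right_mono) auto
  also have "\<dots> \<le> c * s / m"
    using assms by (intro divide_left_mono) auto
  finally have "a / Za * (ln (a / Za) - ln (b / Zb)) \<le> a / Za * (c * s / m)"
    using assms by (intro mult_left_mono) auto
  thus ?thesis
    by (simp add: algebra_simps)
qed

lemma ennreal_integral_le_nn_integral:
  fixes f g :: "'a \<Rightarrow> real"
  assumes "\<And>x. x \<in> space M \<Longrightarrow> f x \<le> g x" "\<And>x. x \<in> space M \<Longrightarrow> 0 \<le> g x"
  shows "ennreal (\<integral>x. f x \<partial>M) \<le> (\<integral>\<^sup>+ x. ennreal (g x) \<partial>M)"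
proof (cases "integrable M f")
  case False
  thus ?thesis
    by (simp add: not_integrable_integral_eq)
next
  case True
  have "(\<integral>x. f x \<partial>M) \<le> (\<integral>x. max 0 (f x) \<partial>M)"
    by (rule integral_mono) (use True in auto)
  hence "ennreal (\<integral>x. f x \<partial>M) \<le> ennreal (\<integral>x. max 0 (f x) \<partial>M)"
    by (rule ennreal_leI)
  also have "\<dots> = (\<integral>\<^sup>+ x. ennreal (max 0 (f x)) \<partial>M)"
    by (rule nn_integral_eq_integral[symmetric]) (use True in auto)
  also have "\<dots> \<le> (\<integral>\<^sup>+ x. ennreal (g x) \<partial>M)"
    by (rule nn_integral_mono) (use assms in auto)
  finally show ?thesis .
qed

lemma KL_dens_normalize_le:
  fixes M :: "'a measure" and u p s :: "'a \<Rightarrow> real" and c m :: real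
  assumes "prob_space M"
    and "u \<in> borel_measurable M" "p \<in> borel_measurable M" "s \<in> borel_measurable M"
    and "0 < m" "\<And>x. x \<in> space M \<Longrightarrow> m \<le> p x"
    and "\<And>x. x \<in> space M \<Longrightarrow> p x \<le> u x" "\<And>x. x \<in> space M \<Longrightarrow> u x \<le> 1"
    and "\<And>x. x \<in> space M \<Longrightarrow> u x - p x \<le> c * s x"
    and "0 \<le> c" "\<And>x. x \<in> space M \<Longrightarrow> 0 \<le> s x"
  shows "ennreal (KL_dens M (normalize_density M u) (normalize_density M p))
         \<le> ennreal (c / m) * (\<integral>\<^sup>+ x. ennreal (normalize_density M u x * s x) \<partial>M)"
proof -
  interpret prob_space M by fact
  define Zu where "Zu = (\<integral>x. u x \<partial>M)"
  define Zp where "Zp = (\<integral>x. p x \<partial>M)"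
  have p_pos: "0 < p x" if "x \<in> space M" for x
    using assms(5) assms(6)[OF that] by linarith
  have u_pos: "0 < u x" and p_le_1: "p x \<le> 1" if "x \<in> space M" for x
    using p_pos[OF that] assms(7,8)[OF that] by linarith+
  have int_u: "integrable M u"
    by (rule integrable_const_bound[where B = 1])
      (use assms(2) in \<open>auto intro!: AE_I2 simp: abs_le_iff dest: u_pos assms(8) less_imp_le\<close>)
  have int_p: "integrable M p"
    by (rule integrable_const_bound[where B = 1])
      (use assms(3) in \<open>auto intro!: AE_I2 simp: abs_le_iff dest: p_pos p_le_1 less_imp_le\<close>)
  have "m = (\<integral>x. m \<partial>M)"
    by (simp add: prob_space)
  also have "\<dots> \<le> Zp"
    unfolding Zp_def by (rule integral_mono) (use int_p assms(6) in auto)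
  finally have Zp_pos: "0 < Zp"
    using assms(5) by linarith
  have Zp_le_Zu: "Zp \<le> Zu"
    unfolding Zp_def Zu_def by (rule integral_mono) (use int_p int_u assms(7) in auto)
  have pointwise: "normalize_density M u x * (ln (normalize_density M u x) - ln (normalize_density M p x))
      \<le> c / m * (normalize_density M u x * s x)" if "x \<in> space M" for x
    unfolding normalize_density_def Zu_def[symmetric] Zp_def[symmetric]
    using assms(6,7,9,11)[OF that] assms(5,10) Zp_pos Zp_le_Zu
    by (intro normalized_log_ratio_le) auto
  have nonneg: "0 \<le> c / m * (normalize_density M u x * s x)" if "x \<in> space M" for x
    unfolding normalize_density_def Zu_def[symmetric]
    using assms(5,10) assms(11)[OF that] u_pos[OF that] Zp_pos Zp_le_Zu by auto
  have "ennreal (KL_dens M (normalize_density M u) (normalize_density M p))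
      \<le> (\<integral>\<^sup>+ x. ennreal (c / m * (normalize_density M u x * s x)) \<partial>M)"
    unfolding KL_dens_def using pointwise nonneg by (rule ennreal_integral_le_nn_integral)
  also have "\<dots> = (\<integral>\<^sup>+ x. ennreal (c / m) * ennreal (normalize_density M u x * s x) \<partial>M)"
    using assms(5,10) by (simp only: ennreal_mult'[of "c / m"] divide_nonneg_pos)
  also have "\<dots> = ennreal (c / m) * (\<integral>\<^sup>+ x. ennreal (normalize_density M u x * s x) \<partial>M)"
    using assms(2,4) by (intro nn_integral_cmult) (simp add: normalize_density_def)
  finally show ?thesis .
qed

lemma clip_ucb_bounds:
  fixes p :: real
  assumes "0 \<le> p" "p \<le> 1" "\<bar>p - pihat x\<bar> \<le> beta * sd x"
  shows "p \<le> clip_ucb pihat beta sd x" "clip_ucb pihat beta sd x \<le> 1"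
    "clip_ucb pihat beta sd x - p \<le> 2 * beta * sd x"
  using assms by (auto simp: clip_ucb_def abs_le_iff)

theorem mainTheorem5:
  fixes M :: "'a::topological_space measure"
    and pi pihat sd :: "'a \<Rightarrow> real"
    and beta :: real
  assumes "prob_space M"
    and "compact (space M)"
    and "sets M = sets (restrict_space borel (space M))"
    and "pi \<in> borel_measurable M"
    and "\<And>x. x \<in> space M \<Longrightarrow> 0 < pi x \<and> pi x < 1"
    and "(INF x\<in>space M. pi x) > 0"
    and "pihat \<in> borel_measurable M"
    and "sd \<in> borel_measurable M"
    and "\<And>x. x \<in> space M \<Longrightarrow> sd x \<ge> 0"
    and "beta \<ge> 0"
    and "\<And>x. x \<in> space M \<Longrightarrow> \<bar>pi x - pihat x\<bar> \<le> beta * sd x"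
  shows "ennreal (KL_dens M (normalize_density M (clip_ucb pihat beta sd))
                             (normalize_density M pi))
         \<le> ennreal (2 * (1 / (INF x\<in>space M. pi x)) * beta)
            * (\<integral>\<^sup>+ x. ennreal (normalize_density M (clip_ucb pihat beta sd) x * sd x) \<partial>M)"
proof -
  let ?m = "INF x\<in>space M. pi x"
  have inf_le: "?m \<le> pi x" if "x \<in> space M" for x
    using that assms(5) by (intro cINF_lower) (auto intro!: bdd_belowI[where m = 0] less_imp_le)
  have clip: "pi x \<le> clip_ucb pihat beta sd x" "clip_ucb pihat beta sd x \<le> 1"
      "clip_ucb pihat beta sd x - pi x \<le> 2 * beta * sd x" if "x \<in> space M" for x
    using clip_ucb_bounds[of "pi x"] assms(5,11)[OF that] by auto
  have "clip_ucb pihat beta sd \<in> borel_measurable M"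
    unfolding clip_ucb_def using assms(7,8) by measurable
  then have "ennreal (KL_dens M (normalize_density M (clip_ucb pihat beta sd)) (normalize_density M pi))
      \<le> ennreal (2 * beta / ?m)
        * (\<integral>\<^sup>+ x. ennreal (normalize_density M (clip_ucb pihat beta sd) x * sd x) \<partial>M)"
    using assms(1,4,6,8,9,10) inf_le clip
    by (intro KL_dens_normalize_le) auto
  thus ?thesis
    by simp
qed

end
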